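(* Let $p_1,p_2,\dots$ be an infinite sequence of distinct primes and $e_i\in\mathbb N$ for each $i$. Consider the unital ring $P=\prod_{i\in\mathbb N}\mathbb Z(p_i^{e_i})$ (componentwise operations) and let $G$ be a unital subring of $P$ containing the ideal $T=\bigoplus_{i\in\mathbb N}\mathbb Z(p_i^{e_i})$. If the quotient ring $G/T$ is a field, then $G$ is an E-ring and its additive group is strongly co-Hopfian; moreover, if the $e_i$ are not bounded, then $G$ is not uniformly strongly co-Hopfian.
   Context: All groups are abelian. A ring $R$ is an E-ring if every endomorphism of its additive group is multiplication by some element of $R$. A group $G$ is strongly co-Hopfian if for every endomorphism $f$ there is $n\in\mathbb N$ with $f^n(G)=f^{n+1}(G)$; it is uniformly strongly co-Hopfian if there is a fixed $m$ with $\phi^m(G)=\phi^{m+1}(G)$ for all endomorphisms $\phi$. $\mathbb Z(q)$ denotes the cyclic group (ring) of order $q$. *)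

theory Defs
  imports "HOL-Algebra.Algebra" "HOL-Computational_Algebra.Primes"
begin

definition modulus :: "(nat \<Rightarrow> nat) \<Rightarrow> (nat \<Rightarrow> nat) \<Rightarrow> nat \<Rightarrow> int" where
  "modulus p e i = int (p i ^ e i)"

definition Pring :: "(nat \<Rightarrow> nat) \<Rightarrow> (nat \<Rightarrow> nat) \<Rightarrow> (nat \<Rightarrow> int) ring" where
  "Pring p e =
    \<lparr>carrier = {f. \<forall>i. 0 \<le> f i \<and> f i < modulus p e i},
     monoid.mult = (\<lambda>f g i. (f i * g i) mod modulus p e i),
     monoid.one = (\<lambda>i. 1 mod modulus p e i),
     ring.zero = (\<lambda>i. 0),
     ring.add = (\<lambda>f g i. (f i + g i) mod modulus p e i)\<rparr>"

definition Tset :: "(nat \<Rightarrow> nat) \<Rightarrow> (nat \<Rightarrow> nat) \<Rightarrow> (nat \<Rightarrow> int) set" where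
  "Tset p e = {f \<in> carrier (Pring p e). finite {i. f i \<noteq> 0}}"

definition add_endo :: "('a, 'b) ring_scheme \<Rightarrow> ('a \<Rightarrow> 'a) \<Rightarrow> bool" where
  "add_endo R f \<longleftrightarrow> (\<forall>x\<in>carrier R. f x \<in> carrier R) \<and>
     (\<forall>x\<in>carrier R. \<forall>y\<in>carrier R. f (x \<oplus>\<^bsub>R\<^esub> y) = f x \<oplus>\<^bsub>R\<^esub> f y)"

definition E_ring :: "('a, 'b) ring_scheme \<Rightarrow> bool" where
  "E_ring R \<longleftrightarrow> (\<forall>f. add_endo R f \<longrightarrow>
     (\<exists>r\<in>carrier R. \<forall>x\<in>carrier R. f x = r \<otimes>\<^bsub>R\<^esub> x))"

definition strongly_co_Hopfian :: "('a, 'b) ring_scheme \<Rightarrow> bool" where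
  "strongly_co_Hopfian R \<longleftrightarrow> (\<forall>f. add_endo R f \<longrightarrow>
     (\<exists>n. (f ^^ n) ` carrier R = (f ^^ Suc n) ` carrier R))"

definition uniformly_strongly_co_Hopfian :: "('a, 'b) ring_scheme \<Rightarrow> bool" where
  "uniformly_strongly_co_Hopfian R \<longleftrightarrow> (\<exists>m. \<forall>f. add_endo R f \<longrightarrow>
     (f ^^ m) ` carrier R = (f ^^ Suc m) ` carrier R)"

end

theory Submission
  imports Defs "HOL-Number_Theory.Cong"
begin

(* Every additive endomorphism f of G acts coordinatewise. Since G/T is a field, the element
   q_i 1 (where q_i = p_i^e_i), being nonzero in infinitely many coordinates, is invertible
   modulo T, say by v. So every y in G
   with y_i = 0 splits as y = q_i (v y) + z with z in T and z_i = 0. Both summands are sent by f to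
   elements vanishing at i: f commutes with multiplication by q_i, and z is annihilated by an
   integer coprime to q_i. Hence f(x)_i depends only on x_i, which gives f(x) = f(1) x.

   For strong co-Hopficity, every r in G is von Neumann regular modulo T, and in Z(p^e) the ideals
   r^n Z(p^e) are constant for n >= e; so the images of the powers of multiplication by r stabilise.
   The powers of multiplication by p_i in the single coordinate i do not stabilise before the
   e_i-th, which rules out a uniform bound when the e_i are unbounded. *)

lemma prime_power_dvd_power_if_not_coprime:
  fixes p a :: int
  assumes "Factorial_Ring.prime p" and "\<not> coprime a (p ^ k)"
  shows "p ^ k dvd a ^ k"
proof -
  have "p dvd a"
    using assms prime_imp_coprime[of p a] by (auto simp: coprime_commute)
  then show ?thesis by (rule dvd_power_same)
qed

lemma ex_cong_pow_Suc_prime_power: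
  fixes p a :: int
  assumes "Factorial_Ring.prime p" and "k \<le> n"
  shows "\<exists>s. [a ^ Suc n * s = a ^ n] (mod p ^ k)"
proof (cases "coprime a (p ^ k)")
  case True
  then obtain s where s: "[a * s = 1] (mod p ^ k)"
    using cong_solve_coprime_int by blast
  have "[a ^ n * (a * s) = a ^ n * 1] (mod p ^ k)"
    using s by (rule cong_scalar_left)
  then show ?thesis by (auto simp: mult.assoc mult.left_commute)
next
  case False
  have "p ^ k dvd a ^ n"
    using prime_power_dvd_power_if_not_coprime[OF assms(1) False] assms(2)
    by (meson dvd_trans le_imp_power_dvd)
  then have "[a ^ Suc n * 0 = a ^ n] (mod p ^ k)"
    by (simp add: cong_0_iff cong_sym)
  then show ?thesis by blast
qed

lemma cong_pow_Suc_if_regular: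
  fixes a s m :: int
  assumes "[a * s * a = a] (mod m)" and "0 < n"
  shows "[a ^ Suc n * s = a ^ n] (mod m)"
proof -
  obtain k where n: "n = Suc k" using assms(2) gr0_implies_Suc by blast
  have "[a ^ k * (a * s * a) = a ^ k * a] (mod m)"
    using assms(1) by (rule cong_scalar_left)
  then show ?thesis by (simp add: n algebra_simps)
qed

lemma not_cong_pow_Suc_multiple:
  fixes P y :: int
  assumes "1 < P" and "m < k"
  shows "\<not> [P ^ m = P ^ Suc m * y] (mod P ^ k)"
proof
  assume "[P ^ m = P ^ Suc m * y] (mod P ^ k)"
  then have "[P ^ m = P ^ Suc m * y] (mod P ^ Suc m)"
    using assms(2) by (elim cong_dvd_modulus) (simp only: le_imp_power_dvd Suc_le_eq)
  then have "P ^ Suc m dvd P ^ m"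
    by (simp add: cong_dvd_iff)
  then have "P ^ Suc m \<le> P ^ m"
    using assms(1) by (intro zdvd_imp_le) simp_all
  then show False
    using assms(1) by simp
qed

lemma funpow_image_eq_on:
  assumes "\<forall>x\<in>A. f x = g x" and "g ` A \<subseteq> A"
  shows "(f ^^ k) ` A = (g ^^ k) ` A"
proof -
  have "(f ^^ k) x = (g ^^ k) x \<and> (g ^^ k) x \<in> A" if "x \<in> A" for x
    using that by (induction k) (use assms in auto)
  then show ?thesis
    by (intro image_cong) auto
qed

locale prime_power_product =
  fixes p e :: "nat \<Rightarrow> nat"
  assumes primes: "\<forall>i. Factorial_Ring.prime (p i)"
    and distinct: "inj p"
begin

abbreviation q :: "nat \<Rightarrow> int" where "q \<equiv> modulus p e"

lemma modulus_pos: "0 < q i"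
  using primes prime_gt_0_nat by (simp add: modulus_def)

lemma modulus_gt_1: "0 < e i \<Longrightarrow> 1 < q i"
  using primes prime_gt_1_nat by (simp add: modulus_def)

lemma coprime_prime_powers: "j \<noteq> i \<Longrightarrow> coprime (p j ^ e j) (p i ^ e i)"
  using primes distinct by (simp add: primes_coprime inj_eq)

lemma coprime_modulus: "j \<noteq> i \<Longrightarrow> coprime (q j) (q i)"
  using coprime_prime_powers by (simp add: modulus_def)

lemma carrier_Pring: "x \<in> carrier (Pring p e) \<longleftrightarrow> (\<forall>i. 0 \<le> x i \<and> x i < q i)"
  by (simp add: Pring_def)

lemma mod_in_carrier_Pring [simp]: "(\<lambda>i. a i mod q i) \<in> carrier (Pring p e)"
  by (simp add: carrier_Pring modulus_pos)

lemma Pring_simps: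
  "x \<otimes>\<^bsub>Pring p e\<^esub> y = (\<lambda>i. (x i * y i) mod q i)"
  "x \<oplus>\<^bsub>Pring p e\<^esub> y = (\<lambda>i. (x i + y i) mod q i)"
  "\<one>\<^bsub>Pring p e\<^esub> = (\<lambda>i. 1 mod q i)"
  "\<zero>\<^bsub>Pring p e\<^esub> = (\<lambda>i. 0)"
  by (simp_all add: Pring_def)

lemma Tset_iff: "x \<in> Tset p e \<longleftrightarrow> x \<in> carrier (Pring p e) \<and> (\<forall>\<^sub>F i in cofinite. x i = 0)"
  by (simp add: Tset_def eventually_cofinite)

end

locale subring_containing_Tset = prime_power_product +
  fixes G :: "(nat \<Rightarrow> int) set"
  assumes sub: "subring G (Pring p e)"
    and Tset_subset: "Tset p e \<subseteq> G"
begin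

abbreviation R :: "(nat \<Rightarrow> int) ring" where "R \<equiv> (Pring p e)\<lparr>carrier := G\<rparr>"

lemma R_simps:
  "carrier R = G"
  "x \<otimes>\<^bsub>R\<^esub> y = (\<lambda>i. (x i * y i) mod q i)"
  "x \<oplus>\<^bsub>R\<^esub> y = (\<lambda>i. (x i + y i) mod q i)"
  "\<one>\<^bsub>R\<^esub> = (\<lambda>i. 1 mod q i)"
  "\<zero>\<^bsub>R\<^esub> = (\<lambda>i. 0)"
  by (simp_all add: Pring_def)

lemma G_subset_carrier: "G \<subseteq> carrier (Pring p e)"
  using subgroup.subset[OF subring.axioms(1)[OF sub]] by simp

lemma G_bounds: "x \<in> G \<Longrightarrow> 0 \<le> x i \<and> x i < q i"
  using G_subset_carrier carrier_Pring by blast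

lemma G_zero_if_modulus_dvd: "x \<in> G \<Longrightarrow> q i dvd x i \<Longrightarrow> x i = 0"
  using G_bounds zdvd_not_zless by (metis order_le_less)

lemma G_add_closed: "x \<in> G \<Longrightarrow> y \<in> G \<Longrightarrow> (\<lambda>i. (x i + y i) mod q i) \<in> G"
  using subgroup.m_closed[OF subring.axioms(1)[OF sub], of x y] by (simp add: Pring_def)

lemma G_mult_closed: "x \<in> G \<Longrightarrow> y \<in> G \<Longrightarrow> (\<lambda>i. (x i * y i) mod q i) \<in> G"
  using submonoid.m_closed[OF subring.axioms(2)[OF sub], of x y] by (simp add: Pring_def)

lemma G_one_closed: "(\<lambda>i. 1 mod q i) \<in> G"
  using submonoid.one_closed[OF subring.axioms(2)[OF sub]] by (simp add: Pring_def)

lemma G_zero_closed: "(\<lambda>i. 0) \<in> G"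
  using subgroup.one_closed[OF subring.axioms(1)[OF sub]] by (simp add: Pring_def)

lemma nat_multiple_Suc:
  "(\<lambda>i. (int (Suc n) * x i) mod q i) = (\<lambda>i. (x i + (int n * x i) mod q i) mod q i)"
  by (simp add: distrib_right mod_add_right_eq)

lemma G_nat_multiple_closed: "x \<in> G \<Longrightarrow> (\<lambda>i. (int n * x i) mod q i) \<in> G"
proof (induction n)
  case 0
  then show ?case by (simp add: G_zero_closed)
next
  case (Suc n)
  then show ?case
    unfolding nat_multiple_Suc by (intro G_add_closed) simp_all
qed

lemma G_if_cofinite_eq:
  assumes "y \<in> carrier (Pring p e)" and "x \<in> G" and "\<forall>\<^sub>F i in cofinite. y i = x i"
  shows "y \<in> G"
proof -
  define t where "t = (\<lambda>i. (y i - x i) mod q i)"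
  have "t \<in> Tset p e"
    using assms(3) unfolding Tset_iff t_def by (auto elim: eventually_mono)
  then have "(\<lambda>i. (x i + t i) mod q i) \<in> G"
    using G_add_closed assms(2) Tset_subset by blast
  moreover have "(\<lambda>i. (x i + t i) mod q i) = y"
    using assms(1) by (auto simp: t_def carrier_Pring mod_add_right_eq)
  ultimately show ?thesis by simp
qed

lemma a_rcoset_Tset_iff:
  assumes "a \<in> carrier (Pring p e)"
  shows "z \<in> Tset p e +>\<^bsub>R\<^esub> a \<longleftrightarrow>
    z \<in> carrier (Pring p e) \<and> (\<forall>\<^sub>F i in cofinite. z i = a i)"
proof
  assume "z \<in> Tset p e +>\<^bsub>R\<^esub> a"
  then obtain t where t: "t \<in> Tset p e" and z: "z = (\<lambda>i. (t i + a i) mod q i)"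
    unfolding a_r_coset_def' R_simps by blast
  have "\<forall>\<^sub>F i in cofinite. z i = a i"
    using t assms unfolding Tset_iff by (auto simp: z carrier_Pring elim: eventually_mono)
  then show "z \<in> carrier (Pring p e) \<and> (\<forall>\<^sub>F i in cofinite. z i = a i)"
    by (simp add: z)
next
  assume z: "z \<in> carrier (Pring p e) \<and> (\<forall>\<^sub>F i in cofinite. z i = a i)"
  define t where "t = (\<lambda>i. (z i - a i) mod q i)"
  have "t \<in> Tset p e"
    using z unfolding Tset_iff t_def by (auto elim: eventually_mono)
  moreover have "z = (\<lambda>i. (t i + a i) mod q i)"
    using z by (auto simp: t_def carrier_Pring mod_add_left_eq)
  ultimately show "z \<in> Tset p e +>\<^bsub>R\<^esub> a"
    unfolding a_r_coset_def' R_simps by blast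
qed

lemma mem_a_rcoset_Tset: "a \<in> G \<Longrightarrow> a \<in> Tset p e +>\<^bsub>R\<^esub> a"
  using G_subset_carrier a_rcoset_Tset_iff by auto

lemma a_rcoset_Tset_eq_Tset:
  assumes "a \<in> Tset p e"
  shows "Tset p e +>\<^bsub>R\<^esub> a = Tset p e"
proof -
  have a: "a \<in> carrier (Pring p e)" "\<forall>\<^sub>F i in cofinite. a i = 0"
    using assms by (simp_all add: Tset_iff)
  have "(\<forall>\<^sub>F i in cofinite. z i = a i) \<longleftrightarrow> (\<forall>\<^sub>F i in cofinite. z i = 0)" for z
    using a(2) by (auto elim: eventually_elim2)
  then show ?thesis
    using a(1) by (auto simp: a_rcoset_Tset_iff Tset_iff)
qed

context
  fixes f :: "(nat \<Rightarrow> int) \<Rightarrow> nat \<Rightarrow> int"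
  assumes endo: "add_endo R f"
begin

lemma endo_closed: "x \<in> G \<Longrightarrow> f x \<in> G"
  using endo unfolding add_endo_def R_simps by blast

lemma endo_add:
  "x \<in> G \<Longrightarrow> y \<in> G \<Longrightarrow> f (\<lambda>i. (x i + y i) mod q i) = (\<lambda>i. (f x i + f y i) mod q i)"
  using endo unfolding add_endo_def R_simps by blast

lemma endo_zero: "f (\<lambda>i. 0) = (\<lambda>i. 0)"
proof
  fix i
  let ?z = "f (\<lambda>i. 0) i"
  have "f (\<lambda>i. 0) = (\<lambda>i. (f (\<lambda>i. 0) i + f (\<lambda>i. 0) i) mod q i)"
    using endo_add[OF G_zero_closed G_zero_closed] by simp
  then have "?z = (?z + ?z) mod q i"
    by (rule fun_cong)
  then have "(?z + ?z) mod q i = ?z mod q i"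
    using G_bounds[OF endo_closed[OF G_zero_closed]] by simp
  then have "q i dvd ?z"
    by (simp add: mod_eq_dvd_iff)
  then show "?z = 0"
    using G_zero_if_modulus_dvd endo_closed G_zero_closed by blast
qed

lemma endo_nat_multiple:
  "x \<in> G \<Longrightarrow> f (\<lambda>i. (int n * x i) mod q i) = (\<lambda>i. (int n * f x i) mod q i)"
proof (induction n)
  case 0
  then show ?case by (simp add: endo_zero)
next
  case (Suc n)
  then show ?case
    by (simp only: nat_multiple_Suc endo_add G_nat_multiple_closed)
qed

lemma endo_coord_zero_if_Tset:
  assumes z: "z \<in> Tset p e" and zi: "z i = 0"
  shows "f z i = 0"
proof -
  define S where "S = {j. z j \<noteq> 0}"
  define n where "n = (\<Prod>j\<in>S. p j ^ e j)"
  have "finite S" using z by (simp add: S_def Tset_def)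
  have "i \<notin> S" using zi by (simp add: S_def)
  have "(\<lambda>j. (int n * z j) mod q j) = (\<lambda>j. 0)"
  proof
    fix j
    show "(int n * z j) mod q j = 0"
    proof (cases "j \<in> S")
      case True
      then have "p j ^ e j dvd n"
        unfolding n_def using \<open>finite S\<close> by (rule dvd_prodI[rotated])
      then have "q j dvd int n"
        by (simp add: modulus_def flip: of_nat_power)
      then show ?thesis by simp
    next
      case False
      then show ?thesis by (simp add: S_def)
    qed
  qed
  moreover have "z \<in> G"
    using z Tset_subset by blast
  ultimately have "(\<lambda>j. (int n * f z j) mod q j) = (\<lambda>j. 0)"
    using endo_nat_multiple[of z n] endo_zero by simp
  then have "(int n * f z i) mod q i = 0"
    by (rule fun_cong)
  then have "q i dvd int n * f z i"
    by (simp add: dvd_eq_mod_eq_0)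
  moreover have "coprime n (p i ^ e i)"
    unfolding n_def
    using \<open>i \<notin> S\<close> by (intro prod_coprime_left coprime_prime_powers) auto
  then have "coprime (q i) (int n)"
    by (simp add: modulus_def coprime_commute)
  ultimately have "q i dvd f z i"
    using coprime_dvd_mult_right_iff by blast
  then show ?thesis
    using G_zero_if_modulus_dvd endo_closed \<open>z \<in> G\<close> by blast
qed

end

lemma mult_add_endo: "r \<in> G \<Longrightarrow> add_endo R (\<lambda>x. r \<otimes>\<^bsub>R\<^esub> x)"
  unfolding add_endo_def R_simps
proof (intro conjI ballI)
  show "x \<in> G \<Longrightarrow> (\<lambda>i. (r i * x i) mod q i) \<in> G" if "r \<in> G" for x
    using that by (rule G_mult_closed)
  show "(\<lambda>i. (r i * ((x i + y i) mod q i)) mod q i) =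
      (\<lambda>i. ((r i * x i) mod q i + (r i * y i) mod q i) mod q i)" for x y
    by (simp add: mod_add_eq mod_mult_right_eq distrib_left)
qed

lemma funpow_mult:
  assumes "x \<in> carrier (Pring p e)"
  shows "((\<lambda>x. r \<otimes>\<^bsub>R\<^esub> x) ^^ k) x = (\<lambda>i. (r i ^ k * x i) mod q i)"
proof (induction k)
  case 0
  then show ?case using assms by (auto simp: carrier_Pring)
next
  case (Suc k)
  then show ?case by (simp add: Pring_simps mod_simps mult.assoc)
qed

lemma mult_image_stable:
  assumes r: "r \<in> G" and "t \<in> G" and t: "\<forall>j. [r j ^ Suc n * t j = r j ^ n] (mod q j)"
  shows "((\<lambda>x. r \<otimes>\<^bsub>R\<^esub> x) ^^ n) ` G = ((\<lambda>x. r \<otimes>\<^bsub>R\<^esub> x) ^^ Suc n) ` G"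
proof
  let ?g = "\<lambda>x. r \<otimes>\<^bsub>R\<^esub> x"
  show "(?g ^^ n) ` G \<subseteq> (?g ^^ Suc n) ` G"
  proof
    fix z
    assume "z \<in> (?g ^^ n) ` G"
    then obtain x where z: "z = (?g ^^ n) x" and "x \<in> G"
      by (rule imageE)
    define y where "y = (\<lambda>j. (t j * x j) mod q j)"
    have "y \<in> G"
      unfolding y_def by (rule G_mult_closed[OF \<open>t \<in> G\<close> \<open>x \<in> G\<close>])
    have y_cong: "[r j ^ Suc n * y j = r j ^ n * x j] (mod q j)" for j
    proof -
      have "[r j ^ Suc n * y j = r j ^ Suc n * (t j * x j)] (mod q j)"
        unfolding y_def by (rule cong_scalar_left) simp
      also have "[r j ^ Suc n * (t j * x j) = r j ^ n * x j] (mod q j)"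
        using cong_scalar_right[OF t[rule_format, of j], of "x j"] by (simp add: mult.assoc)
      finally show ?thesis .
    qed
    have "(?g ^^ Suc n) y = (\<lambda>j. (r j ^ Suc n * y j) mod q j)"
      using G_subset_carrier \<open>y \<in> G\<close> by (intro funpow_mult) auto
    also have "\<dots> = (\<lambda>j. (r j ^ n * x j) mod q j)"
      by (rule ext) (rule y_cong[unfolded cong_def])
    also have "\<dots> = z"
      unfolding z using G_subset_carrier \<open>x \<in> G\<close> by (intro funpow_mult[symmetric]) auto
    finally show "z \<in> (?g ^^ Suc n) ` G"
      using \<open>y \<in> G\<close> by (rule image_eqI[OF sym])
  qed
  show "(?g ^^ Suc n) ` G \<subseteq> (?g ^^ n) ` G"
  proof
    fix z
    assume "z \<in> (?g ^^ Suc n) ` G"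
    then obtain x where z: "z = (?g ^^ Suc n) x" and "x \<in> G"
      by (rule imageE)
    have "?g x \<in> G"
      unfolding R_simps(2) by (rule G_mult_closed[OF r \<open>x \<in> G\<close>])
    moreover have "z = (?g ^^ n) (?g x)"
      unfolding z by (simp only: funpow_Suc_right comp_apply)
    ultimately show "z \<in> (?g ^^ n) ` G"
      by (rule image_eqI[where f = "?g ^^ n", rotated])
  qed
qed

lemma not_uniformly_strongly_co_Hopfian:
  assumes "\<not> bdd_above (range e)"
  shows "\<not> uniformly_strongly_co_Hopfian R"
proof
  assume "uniformly_strongly_co_Hopfian R"
  then obtain m where m: "\<And>f. add_endo R f \<Longrightarrow> (f ^^ m) ` G = (f ^^ Suc m) ` G"
    unfolding uniformly_strongly_co_Hopfian_def R_simps by blast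
  obtain i where "m < e i"
    using assms by (meson bdd_above.I2 not_le_imp_less)
  define P where "P = int (p i)"
  define r where "r = (\<lambda>j. if j = i then P mod q j else 0)"
  have "r \<in> Tset p e"
    unfolding Tset_iff by (auto simp: carrier_Pring r_def modulus_pos eventually_cofinite)
  then have r: "r \<in> G"
    using Tset_subset by blast
  let ?g = "\<lambda>x. r \<otimes>\<^bsub>R\<^esub> x"
  have "(?g ^^ m) (\<lambda>j. 1 mod q j) \<in> (?g ^^ Suc m) ` G"
    using m[OF mult_add_endo[OF r]] G_one_closed by blast
  then obtain y where "y \<in> G" and y: "(?g ^^ m) (\<lambda>j. 1 mod q j) = (?g ^^ Suc m) y"
    by blast
  from y have "(?g ^^ m) (\<lambda>j. 1 mod q j) i = (?g ^^ Suc m) y i"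
    by (rule fun_cong)
  moreover have "1 mod q i = 1"
    using modulus_gt_1 \<open>m < e i\<close> by simp
  ultimately have y_i: "[(P mod q i) ^ m * 1 = (P mod q i) ^ Suc m * y i] (mod q i)"
    using funpow_mult[of "\<lambda>j. 1 mod q j" m r] funpow_mult[of y "Suc m" r]
      G_subset_carrier \<open>y \<in> G\<close>
    by (auto simp: r_def cong_def simp del: funpow.simps)
  have r_i: "[(P mod q i) ^ k * z = P ^ k * z] (mod q i)" for k z
    by (intro cong_scalar_right cong_pow) simp
  have "[P ^ m * 1 = (P mod q i) ^ m * 1] (mod q i)"
    using r_i by (rule cong_sym)
  also note y_i
  also note r_i
  finally have "[P ^ m = P ^ Suc m * y i] (mod P ^ e i)"
    by (simp add: P_def modulus_def)
  moreover have "1 < P"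
    using primes prime_gt_1_nat by (simp add: P_def)
  ultimately show False
    using not_cong_pow_Suc_multiple \<open>m < e i\<close> by blast
qed

end

locale subring_field_quotient = subring_containing_Tset +
  assumes field_quotient: "field (R Quot Tset p e)"
begin

lemma one_notin_Tset: "(\<lambda>i. 1 mod q i) \<notin> Tset p e"
proof
  assume "(\<lambda>i. 1 mod q i) \<in> Tset p e"
  then have "\<one>\<^bsub>R Quot Tset p e\<^esub> = \<zero>\<^bsub>R Quot Tset p e\<^esub>"
    using a_rcoset_Tset_eq_Tset by (simp add: FactRing_def R_simps)
  then show False
    using domain.one_not_zero[OF field.axioms(1)[OF field_quotient]] by simp
qed

lemma infinite_nonzero_exponents: "infinite {i. 0 < e i}"
proof
  assume "finite {i. 0 < e i}"
  moreover have "{i. 1 mod q i \<noteq> 0} \<subseteq> {i. 0 < e i}"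
    by (auto simp: modulus_def)
  ultimately have "(\<lambda>i. 1 mod q i) \<in> Tset p e"
    by (auto simp: Tset_iff eventually_cofinite intro: finite_subset)
  then show False
    using one_notin_Tset by simp
qed

lemma inverse_mod_Tset:
  assumes a: "a \<in> G" and "a \<notin> Tset p e"
  shows "\<exists>b\<in>G. \<forall>\<^sub>F i in cofinite. [a i * b i = 1] (mod q i)"
proof -
  let ?Q = "R Quot Tset p e"
  let ?A = "Tset p e +>\<^bsub>R\<^esub> a"
  have "?A \<in> carrier ?Q"
    using a by (auto simp: FactRing_def A_RCOSETS_def' R_simps)
  moreover have "?A \<noteq> \<zero>\<^bsub>?Q\<^esub>"
    using mem_a_rcoset_Tset[OF a] \<open>a \<notin> Tset p e\<close> by (auto simp: FactRing_def)
  ultimately have "?A \<in> Units ?Q"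
    using field.field_Units[OF field_quotient] by blast
  then obtain B where "B \<in> carrier ?Q" and AB: "?A \<otimes>\<^bsub>?Q\<^esub> B = \<one>\<^bsub>?Q\<^esub>"
    unfolding Units_def by blast
  then obtain b where b: "b \<in> G" and B: "B = Tset p e +>\<^bsub>R\<^esub> b"
    by (auto simp: FactRing_def A_RCOSETS_def' R_simps)
  have "(\<lambda>i. (a i * b i) mod q i) \<in> ?A \<otimes>\<^bsub>?Q\<^esub> B"
    using mem_a_rcoset_Tset[OF a] mem_a_rcoset_Tset[OF b]
      mem_a_rcoset_Tset[OF G_mult_closed[OF a b]]
    by (auto simp: B FactRing_def rcoset_mult_def Pring_simps)
  then have "(\<lambda>i. (a i * b i) mod q i) \<in> Tset p e +>\<^bsub>R\<^esub> (\<lambda>i. 1 mod q i)"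
    using AB by (simp add: FactRing_def R_simps)
  then have "\<forall>\<^sub>F i in cofinite. (a i * b i) mod q i = 1 mod q i"
    by (simp add: a_rcoset_Tset_iff)
  then show ?thesis
    using b by (auto simp: cong_def)
qed

lemma regular_mod_Tset:
  assumes r: "r \<in> G"
  shows "\<exists>s\<in>G. \<forall>\<^sub>F i in cofinite. [r i * s i * r i = r i] (mod q i)"
proof (cases "r \<in> Tset p e")
  case True
  then have "\<forall>\<^sub>F i in cofinite. [r i * 0 * r i = r i] (mod q i)"
    by (auto simp: Tset_iff elim: eventually_mono)
  then show ?thesis
    using G_zero_closed by fastforce
next
  case False
  then obtain b where "b \<in> G" and "\<forall>\<^sub>F i in cofinite. [r i * b i = 1] (mod q i)"
    using inverse_mod_Tset r by blast
  moreover have "[r i * b i * r i = 1 * r i] (mod q i)" if "[r i * b i = 1] (mod q i)" for i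
    using that by (rule cong_scalar_right)
  ultimately have "\<forall>\<^sub>F i in cofinite. [r i * b i * r i = r i] (mod q i)"
    by (auto elim!: eventually_mono)
  then show ?thesis
    using \<open>b \<in> G\<close> by blast
qed

lemma modulus_invertible_mod_Tset: "\<exists>v\<in>G. \<forall>\<^sub>F j in cofinite. [q i * v j = 1] (mod q j)"
proof -
  define c where "c = (\<lambda>j. (int (p i ^ e i) * (1 mod q j)) mod q j)"
  have "c \<in> G"
    unfolding c_def by (rule G_nat_multiple_closed[OF G_one_closed])
  have c_cong: "[c j = q i] (mod q j)" for j
    by (simp add: c_def modulus_def cong_def mod_simps)
  have "{j. 0 < e j} - {i} \<subseteq> {j. c j \<noteq> 0}"
  proof
    fix j
    assume j: "j \<in> {j. 0 < e j} - {i}"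
    have "c j \<noteq> 0"
    proof
      assume "c j = 0"
      then have "q j dvd q i"
        using cong_sym[OF c_cong[of j]] by (simp add: cong_0_iff)
      then have "is_unit (q j)"
        using coprime_modulus[of j i] j by (auto simp: coprime_absorb_right)
      then show False
        using modulus_gt_1[of j] j by simp
    qed
    then show "j \<in> {j. c j \<noteq> 0}"
      by simp
  qed
  then have "infinite {j. c j \<noteq> 0}"
    using infinite_nonzero_exponents finite_subset by fastforce
  then have "c \<notin> Tset p e"
    by (simp add: Tset_iff eventually_cofinite)
  then obtain v where "v \<in> G" and v: "\<forall>\<^sub>F j in cofinite. [c j * v j = 1] (mod q j)"
    using inverse_mod_Tset \<open>c \<in> G\<close> by blast
  have "\<forall>\<^sub>F j in cofinite. [q i * v j = 1] (mod q j)"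
    using v by (auto elim!: eventually_mono intro: cong_trans[rotated]
        cong_scalar_right[OF cong_sym[OF c_cong]])
  then show ?thesis
    using \<open>v \<in> G\<close> by blast
qed

lemma G_vanishing_decomposition:
  assumes y: "y \<in> G" and "y i = 0"
  shows "\<exists>w\<in>G. \<exists>z\<in>Tset p e. z i = 0 \<and> y = (\<lambda>j. ((q i * w j) mod q j + z j) mod q j)"
proof -
  obtain v where "v \<in> G" and v: "\<forall>\<^sub>F j in cofinite. [q i * v j = 1] (mod q j)"
    using modulus_invertible_mod_Tset by blast
  define w where "w = (\<lambda>j. (v j * y j) mod q j)"
  define a where "a = (\<lambda>j. (q i * w j) mod q j)"
  define z where "z = (\<lambda>j. (y j - a j) mod q j)"
  have "w \<in> G"
    unfolding w_def by (rule G_mult_closed[OF \<open>v \<in> G\<close> y])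
  have "[a j = y j] (mod q j)" if "[q i * v j = 1] (mod q j)" for j
  proof -
    have "[a j = (q i * v j) * y j] (mod q j)"
      by (simp add: a_def w_def cong_def mod_simps mult.assoc)
    also have "[(q i * v j) * y j = 1 * y j] (mod q j)"
      using that by (rule cong_scalar_right)
    finally show ?thesis by simp
  qed
  moreover have "z j = 0" if "[a j = y j] (mod q j)" for j
    using cong_sym[OF that] by (simp add: z_def cong_iff_dvd_diff mod_eq_0_iff_dvd)
  ultimately have "\<forall>\<^sub>F j in cofinite. z j = 0"
    using v by (auto elim!: eventually_mono)
  then have "z \<in> Tset p e"
    by (simp add: Tset_iff z_def)
  moreover have "z i = 0"
    using \<open>y i = 0\<close> by (simp add: z_def a_def)
  moreover have "y = (\<lambda>j. (a j + z j) mod q j)"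
    using G_bounds[OF y] by (auto simp: z_def mod_add_right_eq)
  ultimately show ?thesis
    using \<open>w \<in> G\<close> unfolding a_def by blast
qed

context
  fixes f :: "(nat \<Rightarrow> int) \<Rightarrow> nat \<Rightarrow> int"
  assumes endo: "add_endo R f"
begin

lemma endo_coord_zero:
  assumes "y \<in> G" and "y i = 0"
  shows "f y i = 0"
proof -
  obtain w z where "w \<in> G" and "z \<in> Tset p e" and "z i = 0"
    and y: "y = (\<lambda>j. ((q i * w j) mod q j + z j) mod q j)"
    using G_vanishing_decomposition assms by blast
  have "z \<in> G"
    using \<open>z \<in> Tset p e\<close> Tset_subset by blast
  have "(\<lambda>j. (q i * w j) mod q j) \<in> G"
    using G_nat_multiple_closed[OF \<open>w \<in> G\<close>, of "p i ^ e i"] by (simp add: modulus_def)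
  then have "f y = (\<lambda>j. (f (\<lambda>j. (q i * w j) mod q j) j + f z j) mod q j)"
    unfolding y using \<open>z \<in> G\<close> by (rule endo_add[OF endo])
  moreover have "f (\<lambda>j. (q i * w j) mod q j) = (\<lambda>j. (q i * f w j) mod q j)"
    using endo_nat_multiple[OF endo \<open>w \<in> G\<close>, of "p i ^ e i"] by (simp add: modulus_def)
  moreover have "f z i = 0"
    using \<open>z \<in> Tset p e\<close> \<open>z i = 0\<close> by (rule endo_coord_zero_if_Tset[OF endo])
  ultimately show ?thesis
    by simp
qed

lemma endo_eq_mult:
  assumes x: "x \<in> G"
  shows "f x = f \<one>\<^bsub>R\<^esub> \<otimes>\<^bsub>R\<^esub> x"
proof -
  let ?r = "f (\<lambda>j. 1 mod q j)"
  have "f x i = (?r i * x i) mod q i" for i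
  proof -
    define n where "n = nat (q i - x i)"
    define u where "u = (\<lambda>j. (int n * (1 mod q j)) mod q j)"
    have "u \<in> G"
      unfolding u_def by (rule G_nat_multiple_closed[OF G_one_closed])
    have n: "int n = q i - x i"
      using G_bounds[OF x, of i] by (simp add: n_def)
    have "(x i + u i) mod q i = 0"
      by (simp add: u_def n mod_simps)
    then have "f (\<lambda>j. (x j + u j) mod q j) i = 0"
      using endo_coord_zero[OF G_add_closed[OF x \<open>u \<in> G\<close>]] by simp
    moreover have "f (\<lambda>j. (x j + u j) mod q j) = (\<lambda>j. (f x j + f u j) mod q j)"
      by (rule endo_add[OF endo x \<open>u \<in> G\<close>])
    moreover have "f u = (\<lambda>j. (int n * ?r j) mod q j)"
      unfolding u_def by (rule endo_nat_multiple[OF endo G_one_closed])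
    ultimately have "(f x i + (q i - x i) * ?r i) mod q i = 0"
      by (simp add: n mod_add_right_eq)
    then have "q i dvd f x i + (q i - x i) * ?r i"
      by (simp only: mod_eq_0_iff_dvd)
    then have "q i dvd (f x i + (q i - x i) * ?r i) - q i * ?r i"
      by (rule dvd_diff) simp
    then have "[f x i = x i * ?r i] (mod q i)"
      by (simp add: cong_iff_dvd_diff left_diff_distrib)
    then show ?thesis
      using G_bounds[OF endo_closed[OF endo x]] by (simp add: cong_def mult.commute)
  qed
  then show ?thesis
    by (simp add: Pring_simps fun_eq_iff)
qed

end

lemma E_ring: "E_ring R"
  unfolding E_ring_def
proof (intro allI impI)
  fix f
  assume endo: "add_endo R f"
  have "f \<one>\<^bsub>R\<^esub> \<in> carrier R"
    using endo_closed[OF endo G_one_closed] by (simp add: R_simps)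
  moreover have "\<forall>x\<in>carrier R. f x = f \<one>\<^bsub>R\<^esub> \<otimes>\<^bsub>R\<^esub> x"
    unfolding R_simps(1) using endo_eq_mult[OF endo] by blast
  ultimately show "\<exists>r\<in>carrier R. \<forall>x\<in>carrier R. f x = r \<otimes>\<^bsub>R\<^esub> x"
    by blast
qed

lemma ex_cong_pow_Suc_almost_in_G:
  assumes r: "r \<in> G"
  shows "\<exists>n. \<exists>s\<in>G. \<exists>s'. finite {j. s' j \<noteq> s j} \<and>
    (\<forall>j. [r j ^ Suc n * s' j = r j ^ n] (mod q j))"
proof -
  obtain s where "s \<in> G" and s: "\<forall>\<^sub>F j in cofinite. [r j * s j * r j = r j] (mod q j)"
    using regular_mod_Tset r by blast
  define F where "F = {j. \<not> [r j * s j * r j = r j] (mod q j)}"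
  define n where "n = Suc (sum e F)"
  have "finite F"
    using s by (simp add: F_def eventually_cofinite)
  have "\<exists>t. [r j ^ Suc n * t = r j ^ n] (mod q j) \<and> (j \<notin> F \<longrightarrow> t = s j)" for j
  proof (cases "j \<in> F")
    case True
    then have "e j \<le> n"
      using \<open>finite F\<close> member_le_sum[of j F e] by (simp add: n_def)
    moreover have "Factorial_Ring.prime (int (p j))"
      using primes by simp
    ultimately show ?thesis
      using ex_cong_pow_Suc_prime_power True by (simp add: modulus_def)
  next
    case False
    then have "[r j * s j * r j = r j] (mod q j)"
      by (simp add: F_def)
    then have "[r j ^ Suc n * s j = r j ^ n] (mod q j)"
      by (rule cong_pow_Suc_if_regular) (simp add: n_def)
    then show ?thesis
      by blast
  qed
  then have "\<forall>j. \<exists>t. [r j ^ Suc n * t = r j ^ n] (mod q j) \<and> (j \<notin> F \<longrightarrow> t = s j)"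
    by blast
  then obtain s' where s': "\<forall>j. [r j ^ Suc n * s' j = r j ^ n] (mod q j) \<and> (j \<notin> F \<longrightarrow> s' j = s j)"
    by (rule exE[OF choice])
  then have "{j. s' j \<noteq> s j} \<subseteq> F"
    by blast
  then have "finite {j. s' j \<noteq> s j}"
    using \<open>finite F\<close> by (rule finite_subset)
  then show ?thesis
    using \<open>s \<in> G\<close> s' by blast
qed

lemma ex_cong_pow_Suc_in_G:
  assumes "r \<in> G"
  shows "\<exists>n. \<exists>t\<in>G. \<forall>j. [r j ^ Suc n * t j = r j ^ n] (mod q j)"
proof -
  obtain n s s' where "s \<in> G" and fin: "finite {j. s' j \<noteq> s j}"
    and s': "\<forall>j. [r j ^ Suc n * s' j = r j ^ n] (mod q j)"
    using ex_cong_pow_Suc_almost_in_G[OF assms] by blast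
  define t where "t = (\<lambda>j. s' j mod q j)"
  have "{j. t j \<noteq> s j} \<subseteq> {j. s' j \<noteq> s j}"
    using G_bounds[OF \<open>s \<in> G\<close>] by (auto simp: t_def)
  then have "finite {j. t j \<noteq> s j}"
    using fin by (rule finite_subset)
  then have "\<forall>\<^sub>F j in cofinite. t j = s j"
    by (simp add: eventually_cofinite)
  with _ \<open>s \<in> G\<close> have "t \<in> G"
    by (rule G_if_cofinite_eq) (simp add: t_def)
  moreover have "[r j ^ Suc n * t j = r j ^ n] (mod q j)" for j
  proof -
    have "[r j ^ Suc n * t j = r j ^ Suc n * s' j] (mod q j)"
      unfolding t_def by (rule cong_scalar_left) simp
    also have "[r j ^ Suc n * s' j = r j ^ n] (mod q j)"
      using s' by blast
    finally show ?thesis .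
  qed
  ultimately show ?thesis
    by (intro exI[of _ n] bexI[of _ t] allI)
qed

lemma strongly_co_Hopfian: "strongly_co_Hopfian R"
  unfolding strongly_co_Hopfian_def R_simps(1)
proof (intro allI impI)
  fix f
  assume endo: "add_endo R f"
  let ?r = "f \<one>\<^bsub>R\<^esub>"
  let ?g = "\<lambda>x. ?r \<otimes>\<^bsub>R\<^esub> x"
  have r: "?r \<in> G"
    using endo_closed[OF endo G_one_closed] by (simp add: R_simps)
  have "?g ` G \<subseteq> G"
    using G_mult_closed[OF r] by (auto simp: Pring_simps)
  then have f_g: "(f ^^ k) ` G = (?g ^^ k) ` G" for k
    using endo_eq_mult[OF endo] by (intro funpow_image_eq_on) auto
  obtain n t where "t \<in> G" and "\<forall>j. [?r j ^ Suc n * t j = ?r j ^ n] (mod q j)"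
    using ex_cong_pow_Suc_in_G[OF r] by blast
  then have "(?g ^^ n) ` G = (?g ^^ Suc n) ` G"
    using mult_image_stable[OF r] by blast
  then show "\<exists>n. (f ^^ n) ` G = (f ^^ Suc n) ` G"
    by (simp only: f_g) blast
qed

end

theorem mainTheorem16:
  fixes p e :: "nat \<Rightarrow> nat" and G :: "(nat \<Rightarrow> int) set"
  assumes primes: "\<forall>i. Factorial_Ring.prime (p i)"
    and distinct: "inj p"
    and sub: "subring G (Pring p e)"
    and T_sub: "Tset p e \<subseteq> G"
    and fld: "field ((Pring p e)\<lparr>carrier := G\<rparr> Quot Tset p e)"
  shows "E_ring ((Pring p e)\<lparr>carrier := G\<rparr>)
    \<and> strongly_co_Hopfian ((Pring p e)\<lparr>carrier := G\<rparr>)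
    \<and> (\<not> bdd_above (range e) \<longrightarrow>
         \<not> uniformly_strongly_co_Hopfian ((Pring p e)\<lparr>carrier := G\<rparr>))"
proof -
  interpret subring_field_quotient p e G
    using primes distinct sub T_sub fld
    by (simp add: subring_field_quotient_def subring_field_quotient_axioms_def
        subring_containing_Tset_def subring_containing_Tset_axioms_def prime_power_product_def)
  show ?thesis
    using E_ring strongly_co_Hopfian not_uniformly_strongly_co_Hopfian by blast
qed

end
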